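(* Let $L>0$, $N\in\mathbb{N}_+$, $h=L/N$, and let $\epsilon>0$, $\theta_0>0$, $\tau>0$, $\alpha\in(0,1)$. Let $u^n\in\mathcal{C}_{per}$ satisfy $-1<u^n<1$ pointwise. Then the Lagrange function $$\mathcal{L}(u_1,w_1,u_2,w_2,u_3,w_3)=Z_1(u_1,w_1)+Z_2(u_2,w_2)+\langle u_3,u_1-u_2\rangle-\langle w_3,w_1-w_2\rangle$$ has a stationary point, i.e. there exist $u_1^*,w_1^*,u_2^*,w_2^*,u_3^*,w_3^*\in\mathcal{C}_{per}$ with $-1<u_2^*<1$ pointwise such that $$-\epsilon^2\Delta_h u_1^*-\alpha w_1^*+u_3^*=0,\qquad \alpha(-u_1^*+u^n)+\tau\Delta_h w_1^*-w_3^*=0,$$ $$\log(1+u_2^* )-\log(1-u_2^* )-\theta_0u^n-(1-\alpha)w_2^*-u_3^*=0,\qquad (1-\alpha)(-u_2^*+u^n)+w_3^*=0,$$ $$u_1^*-u_2^*=0,\qquad w_1^*-w_2^*=0.$$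
   Context: $\mathcal{C}_{per}$ is the space of real grid functions $\nu=(\nu_{i,j,k})_{i,j,k\in\mathbb{Z}}$ that are $N$-periodic in each index ($\nu_{i,j,k}$ is the value at the cell centre $((i-\frac12)h,(j-\frac12)h,(k-\frac12)h)$ of $(0,L)^3$). Inner product: $\langle\nu,\xi\rangle=h^2\sum_{i,j,k=1}^N\nu_{i,j,k}\xi_{i,j,k}$, $\|\nu\|_2=\langle\nu,\nu\rangle^{1/2}$. Discrete Laplacian: $(\Delta_h\nu)_{i,j,k}=h^{-2}(\nu_{i+1,j,k}+\nu_{i-1,j,k}+\nu_{i,j+1,k}+\nu_{i,j-1,k}+\nu_{i,j,k+1}+\nu_{i,j,k-1}-6\nu_{i,j,k})$. Discrete gradient norm: $\|\nabla_h\nu\|_2^2=h^2\sum_{i,j,k=1}^N h^{-2}\big[(\nu_{i+1,j,k}-\nu_{i,j,k})^2+(\nu_{i,j+1,k}-\nu_{i,j,k})^2+(\nu_{i,j,k+1}-\nu_{i,j,k})^2\big]$. Logarithms, products and inequalities of grid functions are pointwise; $1$ denotes the constant grid function. $Z_1(u,w)=\frac{\epsilon^2}{2}\|\nabla_h u\|_2^2-\alpha\langle u-u^n,w\rangle-\frac{\tau}{2}\|\nabla_h w\|_2^2$ and, for $-1<u<1$ pointwise, $Z_2(u,w)=\langle 1+u,\log(1+u)\rangle+\langle 1-u,\log(1-u)\rangle-\theta_0\langle u^n,u\rangle-(1-\alpha)\langle u-u^n,w\rangle$. The displayed system is the vanishing of all partial gradients of $\mathcal{L}$ (the definition of a stationary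 point). *)

theory Defs
  imports Complex_Main
begin

text \<open>Grid functions on the cell centres, indexed by integer triples.
  The space C_per consists of those that are N-periodic in each index.\<close>

type_synonym grid = "int \<times> int \<times> int \<Rightarrow> real"

definition periodic_grid :: "nat \<Rightarrow> grid \<Rightarrow> bool" where
  "periodic_grid N v \<longleftrightarrow>
     (\<forall>i j k. v (i + int N, j, k) = v (i, j, k)
            \<and> v (i, j + int N, k) = v (i, j, k)
            \<and> v (i, j, k + int N) = v (i, j, k))"

definition lap_h :: "real \<Rightarrow> grid \<Rightarrow> grid" where
  "lap_h h v = (\<lambda>(i, j, k).
     (v (i + 1, j, k) + v (i - 1, j, k) + v (i, j + 1, k) + v (i, j - 1, k)
      + v (i, j, k + 1) + v (i, j, k - 1) - 6 * v (i, j, k)) / h\<^sup>2)"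

end

theory Submission
  imports Defs "HOL-Analysis.Analysis" "HOL-Real_Asymp.Real_Asymp"
begin

(* Eliminating u3 and w3 and identifying u1 = u2 = u, w1 = w2 = w (the multiplier \<alpha> then drops
   out), it suffices to find periodic u, w with -1 < u < 1,
     u = u^n + \<tau> \<Delta>_h w   and   w = log (1 + u) - log (1 - u) - \<theta>0 u^n - \<epsilon>^2 \<Delta>_h u.
   Regard u = u^n + \<tau> \<Delta>_h w as a function of w and minimise
     K(w) = \<Sum> \<phi>(u) - \<theta>0 u^n u + \<epsilon>^2/2 |\<nabla>_h u|^2 + \<tau>/2 |\<nabla>_h w|^2,
     \<phi>(x) = (1 + x) log (1 + x) + (1 - x) log (1 - x),
   over the periodic w with |u| <= 1.  K is invariant under adding constants to w and controls
   |\<nabla>_h w|, so a minimiser exists by compactness.  It does not touch u = 1: adding t times the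
   indicator of the contact set {u = 1} to w keeps |u| <= 1 for small t > 0 and changes the smooth
   part of K by O(t), but at a contact point with a neighbour outside the contact set it lowers
   \<phi>(u) by order t log (1/t), since \<phi>' = log (1 + x) - log (1 - x) is infinite at 1.  The case
   u = -1 follows by the symmetry (u^n, w) \<mapsto> (-u^n, -w).  At an interior minimiser the first
   variation in a direction v is \<tau> \<Sum> v \<Delta>_h \<mu> with \<mu> = \<phi>'(u) - \<theta>0 u^n - \<epsilon>^2 \<Delta>_h u - w;
   for v = \<mu> it is a negative multiple of |\<nabla>_h \<mu>|^2, so \<mu> is constant and is absorbed
   into w. *)

section \<open>Periodic grid functions\<close>

lemma periodic_int_mod:
  fixes f :: "int \<Rightarrow> 'a"
  assumes "\<And>x. f (x + n) = f x"
  shows "f (x mod n) = f x"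
proof -
  have "f (y + c * n) = f y" for y c
  proof (induction c rule: int_induct[where k = 0])
    case (step1 c)
    then show ?case using assms[of "y + c * n"] by (simp add: algebra_simps)
  next
    case (step2 c)
    then show ?case using assms[of "y + (c - 1) * n"] by (simp add: algebra_simps)
  qed simp
  from this[of "x mod n" "x div n"] show ?thesis by simp
qed

definition cell :: "nat \<Rightarrow> (int \<times> int \<times> int) set" where
  "cell N = {0..<int N} \<times> {0..<int N} \<times> {0..<int N}"

definition cell_rep :: "nat \<Rightarrow> int \<times> int \<times> int \<Rightarrow> int \<times> int \<times> int" where
  "cell_rep N = (\<lambda>(i, j, k). (i mod int N, j mod int N, k mod int N))"

lemma finite_cell [simp]: "finite (cell N)"
  by (simp add: cell_def)

lemma cell_nonempty: "N \<ge> 1 \<Longrightarrow> cell N \<noteq> {}"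
  by (auto simp: cell_def)

lemma cell_rep_in_cell: "N \<ge> 1 \<Longrightarrow> cell_rep N p \<in> cell N"
  by (cases p) (auto simp: cell_def cell_rep_def)

lemma cell_rep_cell: "p \<in> cell N \<Longrightarrow> cell_rep N p = p"
  by (cases p) (auto simp: cell_rep_def cell_def)

lemma cell_rep_add_cell_rep: "cell_rep N (cell_rep N p + d) = cell_rep N (p + d)"
  by (cases p, cases d) (simp add: cell_rep_def mod_add_left_eq)

lemma periodic_grid_cell_rep:
  assumes "periodic_grid N v"
  shows "v (cell_rep N p) = v p"
proof -
  have x: "v (x mod int N, y, z) = v (x, y, z)"
   and y: "v (x, y mod int N, z) = v (x, y, z)"
   and z: "v (x, y, z mod int N) = v (x, y, z)" for x y z
    using assms periodic_int_mod[where f = "\<lambda>x. v (x, y, z)"]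
      periodic_int_mod[where f = "\<lambda>y. v (x, y, z)"] periodic_int_mod[where f = "\<lambda>z. v (x, y, z)"]
    by (simp_all add: periodic_grid_def)
  show ?thesis by (cases p) (simp add: cell_rep_def x y z)
qed

lemma periodic_grid_in_image_cell: "periodic_grid N v \<Longrightarrow> N \<ge> 1 \<Longrightarrow> v p \<in> v ` cell N"
  by (metis periodic_grid_cell_rep cell_rep_in_cell image_eqI)

lemma periodic_grid_bounded:
  assumes "periodic_grid N v" "N \<ge> 1"
  obtains M where "M > 0" "\<And>p. \<bar>v p\<bar> \<le> M"
proof
  let ?M = "Max ((\<lambda>p. \<bar>v p\<bar>) ` cell N) + 1"
  fix p
  have "\<bar>v (cell_rep N p)\<bar> \<le> Max ((\<lambda>p. \<bar>v p\<bar>) ` cell N)"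
    using cell_rep_in_cell[OF assms(2)] by (intro Max_ge) auto
  then show "\<bar>v p\<bar> \<le> ?M"
    using periodic_grid_cell_rep[OF assms(1)] by simp
  have "0 \<le> Max ((\<lambda>p. \<bar>v p\<bar>) ` cell N)"
    using cell_nonempty[OF assms(2)] by (subst Max_ge_iff) auto
  then show "?M > 0" by simp
qed

lemma periodic_grid_pos_bounded_below:
  assumes "periodic_grid N v" "N \<ge> 1" "\<And>p. v p > 0"
  obtains \<eta> where "\<eta> > 0" "\<And>p. \<eta> \<le> v p"
proof
  let ?\<eta> = "Min (v ` cell N)"
  show "?\<eta> > 0"
    using assms cell_nonempty by (subst Min_gr_iff) auto
  show "?\<eta> \<le> v p" for p
    using periodic_grid_in_image_cell[OF assms(1,2)] by simp
qed

lemma periodic_grid_comp: "periodic_grid N a \<Longrightarrow> periodic_grid N (\<lambda>p. f (a p))"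
  by (simp add: periodic_grid_def)

lemma periodic_grid_comp2:
  "periodic_grid N a \<Longrightarrow> periodic_grid N b \<Longrightarrow> periodic_grid N (\<lambda>p. f (a p) (b p))"
  by (simp add: periodic_grid_def)

lemma periodic_grid_const: "periodic_grid N (\<lambda>p. c)"
  by (simp add: periodic_grid_def)

lemma periodic_grid_iff:
  "periodic_grid N v \<longleftrightarrow>
     (\<forall>p. v (p + (int N, 0, 0)) = v p \<and> v (p + (0, int N, 0)) = v p \<and> v (p + (0, 0, int N)) = v p)"
  by (simp add: periodic_grid_def)

lemma periodic_grid_translate:
  assumes "periodic_grid N v"
  shows "periodic_grid N (\<lambda>p. v (p + d))"
proof -
  obtain a b c where d: "d = (a, b, c)" by (cases d)
  from assms have "v (i + a + int N, j + b, k + c) = v (i + a, j + b, k + c) \<and>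
      v (i + a, j + b + int N, k + c) = v (i + a, j + b, k + c) \<and>
      v (i + a, j + b, k + c + int N) = v (i + a, j + b, k + c)" for i j k
    unfolding periodic_grid_def by blast
  then show ?thesis unfolding periodic_grid_def d by (simp add: algebra_simps)
qed

lemma sum_cell_translate:
  assumes "periodic_grid N f" "N \<ge> 1"
  shows "(\<Sum>p\<in>cell N. f (p + d)) = (\<Sum>p\<in>cell N. f p)"
proof -
  have "(\<Sum>p\<in>cell N. f (p + d)) = (\<Sum>p\<in>cell N. f (cell_rep N (p + d)))"
    using periodic_grid_cell_rep[OF assms(1)] by simp
  also have "\<dots> = (\<Sum>p\<in>cell N. f p)"
  proof (rule sum.reindex_bij_witness[of _ "\<lambda>q. cell_rep N (q - d)" "\<lambda>p. cell_rep N (p + d)"])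
    fix a assume a: "a \<in> cell N"
    show "cell_rep N (cell_rep N (a + d) - d) = a" "cell_rep N (cell_rep N (a - d) + d) = a"
      using cell_rep_add_cell_rep[of N "a + d" "- d"] cell_rep_add_cell_rep[of N "a - d" d]
        cell_rep_cell[OF a] by simp_all
    show "cell_rep N (a + d) \<in> cell N" "cell_rep N (a - d) \<in> cell N"
      using cell_rep_in_cell[OF assms(2)] by blast+
  qed simp
  finally show ?thesis .
qed

section \<open>The discrete Laplacian\<close>

definition nbrs :: "(int \<times> int \<times> int) set" where
  "nbrs = {(1, 0, 0), (-1, 0, 0), (0, 1, 0), (0, -1, 0), (0, 0, 1), (0, 0, -1)}"

lemma finite_nbrs [simp]: "finite nbrs"
  by (simp add: nbrs_def)

lemma card_nbrs: "card nbrs = 6"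
  by (simp add: nbrs_def)

lemma uminus_nbrs: "uminus ` nbrs = nbrs"
  by (auto simp: nbrs_def)

lemma lap_h_nbrs: "lap_h h v p = ((\<Sum>d\<in>nbrs. v (p + d)) - 6 * v p) / h\<^sup>2"
  by (cases p) (simp add: lap_h_def nbrs_def algebra_simps)

lemma lap_h_add: "lap_h h (\<lambda>p. a p + b p) = (\<lambda>p. lap_h h a p + lap_h h b p)"
  unfolding lap_h_def by (cases "h = 0") (auto simp: fun_eq_iff field_simps)

lemma lap_h_diff: "lap_h h (\<lambda>p. a p - b p) = (\<lambda>p. lap_h h a p - lap_h h b p)"
  unfolding lap_h_def by (cases "h = 0") (auto simp: fun_eq_iff field_simps)

lemma lap_h_cmult: "lap_h h (\<lambda>p. c * a p) = (\<lambda>p. c * lap_h h a p)"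
  unfolding lap_h_def by (cases "h = 0") (auto simp: fun_eq_iff field_simps)

lemma lap_h_minus: "lap_h h (\<lambda>p. - a p) = (\<lambda>p. - lap_h h a p)"
  unfolding lap_h_def by (cases "h = 0") (auto simp: fun_eq_iff field_simps)

lemma lap_h_const: "lap_h h (\<lambda>p. c) = (\<lambda>p. 0)"
  by (simp add: lap_h_def fun_eq_iff split_def)

lemma lap_h_add_const: "lap_h h (\<lambda>p. a p + c) = lap_h h a"
  using lap_h_add[of h a "\<lambda>p. c"] by (simp add: lap_h_const)

lemma periodic_grid_lap_h:
  assumes "periodic_grid N v"
  shows "periodic_grid N (lap_h h v)"
proof -
  have "periodic_grid N (\<lambda>p. ((\<Sum>d\<in>nbrs. v (p + d)) - 6 * v p) / h\<^sup>2)"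
    using assms periodic_grid_translate[OF assms] unfolding periodic_grid_iff by simp
  then show ?thesis by (simp add: lap_h_nbrs[abs_def])
qed

lemma sum_cell_nbrs_symmetric:
  assumes "periodic_grid N a" "periodic_grid N b" "N \<ge> 1"
  shows "(\<Sum>p\<in>cell N. a p * (\<Sum>d\<in>nbrs. b (p + d))) = (\<Sum>p\<in>cell N. (\<Sum>d\<in>nbrs. a (p + d)) * b p)"
proof -
  have shift: "(\<Sum>p\<in>cell N. a p * b (p + d)) = (\<Sum>p\<in>cell N. a (p - d) * b p)" for d
  proof -
    have "periodic_grid N (\<lambda>p. a (p - d) * b p)"
      using periodic_grid_comp2[OF periodic_grid_translate[OF assms(1), of "- d"] assms(2)] by simp
    from sum_cell_translate[OF this assms(3), of d] show ?thesis by simp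
  qed
  have "(\<Sum>p\<in>cell N. a p * (\<Sum>d\<in>nbrs. b (p + d))) = (\<Sum>d\<in>nbrs. \<Sum>p\<in>cell N. a (p - d) * b p)"
    by (simp add: sum_distrib_left sum.swap[of _ nbrs] shift)
  also have "\<dots> = (\<Sum>d\<in>uminus ` nbrs. \<Sum>p\<in>cell N. a (p + d) * b p)"
    by (subst sum.reindex) (auto simp: inj_on_def)
  also have "\<dots> = (\<Sum>p\<in>cell N. (\<Sum>d\<in>nbrs. a (p + d)) * b p)"
    by (simp add: uminus_nbrs sum_distrib_right sum.swap[of _ nbrs])
  finally show ?thesis .
qed

lemma sum_cell_mult_lap_h:
  "(\<Sum>p\<in>cell N. a p * lap_h h b p)
     = ((\<Sum>p\<in>cell N. a p * (\<Sum>d\<in>nbrs. b (p + d))) - 6 * (\<Sum>p\<in>cell N. a p * b p)) / h\<^sup>2"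
proof -
  have "a p * lap_h h b p = (a p * (\<Sum>d\<in>nbrs. b (p + d)) - 6 * (a p * b p)) / h\<^sup>2" for p
    by (simp add: lap_h_nbrs algebra_simps)
  then show ?thesis
    by (simp add: sum_divide_distrib[symmetric] sum_subtractf sum_distrib_left)
qed

lemma sum_cell_lap_h_symmetric:
  assumes "periodic_grid N a" "periodic_grid N b" "N \<ge> 1"
  shows "(\<Sum>p\<in>cell N. a p * lap_h h b p) = (\<Sum>p\<in>cell N. lap_h h a p * b p)"
proof -
  have "(\<Sum>p\<in>cell N. lap_h h a p * b p) = (\<Sum>p\<in>cell N. b p * lap_h h a p)"
    by (simp add: mult.commute)
  then show ?thesis
    using sum_cell_nbrs_symmetric[OF assms]
    by (simp add: sum_cell_mult_lap_h mult.commute)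
qed

lemma sum_cell_lap_h:
  assumes "periodic_grid N a" "N \<ge> 1"
  shows "(\<Sum>p\<in>cell N. lap_h h a p) = 0"
  using sum_cell_lap_h_symmetric[OF periodic_grid_const assms(1,2), of 1 h] by (simp add: lap_h_const)

text \<open>Every grid edge is counted from both ends, so \<open>dirichlet_sum N z\<close> is twice the squared
  discrete gradient norm of \<open>z\<close>.\<close>

definition dirichlet_sum :: "nat \<Rightarrow> grid \<Rightarrow> real" where
  "dirichlet_sum N z = (\<Sum>p\<in>cell N. \<Sum>d\<in>nbrs. (z (p + d) - z p)\<^sup>2)"

lemma dirichlet_sum_nonneg: "0 \<le> dirichlet_sum N z"
  unfolding dirichlet_sum_def by (intro sum_nonneg) auto

lemma nbr_diff_le_dirichlet_sum:
  "q \<in> cell N \<Longrightarrow> d \<in> nbrs \<Longrightarrow> (z (q + d) - z q)\<^sup>2 \<le> dirichlet_sum N z"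
  unfolding dirichlet_sum_def
  by (rule order_trans[OF member_le_sum[of d nbrs] member_le_sum[of q "cell N"]])
     (auto intro: sum_nonneg)

lemma sum_cell_mult_lap_h_self:
  assumes "periodic_grid N z" "N \<ge> 1"
  shows "(\<Sum>p\<in>cell N. z p * lap_h h z p) = - dirichlet_sum N z / (2 * h\<^sup>2)"
proof -
  have shift: "(\<Sum>p\<in>cell N. z (p + d) * z (p + d)) = (\<Sum>p\<in>cell N. z p * z p)" for d
    using sum_cell_translate[OF periodic_grid_comp[OF assms(1)] assms(2), of "\<lambda>x. x * x" d] by simp
  have "dirichlet_sum N z = (\<Sum>d\<in>nbrs. \<Sum>p\<in>cell N. (z (p + d))\<^sup>2)
      - 2 * (\<Sum>p\<in>cell N. z p * (\<Sum>d\<in>nbrs. z (p + d))) + 6 * (\<Sum>p\<in>cell N. (z p)\<^sup>2)"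
    unfolding dirichlet_sum_def
    by (simp add: power2_diff sum.distrib sum_subtractf sum_distrib_left card_nbrs
        sum.swap[of _ nbrs] algebra_simps)
  also have "\<dots> = 12 * (\<Sum>p\<in>cell N. z p * z p) - 2 * (\<Sum>p\<in>cell N. z p * (\<Sum>d\<in>nbrs. z (p + d)))"
    by (simp add: shift card_nbrs power2_eq_square)
  finally have "(\<Sum>p\<in>cell N. z p * (\<Sum>d\<in>nbrs. z (p + d))) - 6 * (\<Sum>p\<in>cell N. z p * z p)
      = - dirichlet_sum N z / 2"
    by linarith
  then show ?thesis
    by (simp add: sum_cell_mult_lap_h)
qed

lemma grid_nbrs_induct:
  assumes "P q0" "\<And>p d. P p \<Longrightarrow> d \<in> nbrs \<Longrightarrow> P (p + d)"
  shows "P q"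
proof -
  have line: "Q y" if "Q x" "\<And>z. Q z \<Longrightarrow> Q (z + 1) \<and> Q (z - 1)" for Q :: "int \<Rightarrow> bool" and x y
    by (induction y rule: int_induct[where k = x]) (use that in blast)+
  obtain a b c where q0: "q0 = (a, b, c)" by (cases q0)
  have step: "P (i + 1, j, k) \<and> P (i - 1, j, k)" "P (i, j + 1, k) \<and> P (i, j - 1, k)"
      "P (i, j, k + 1) \<and> P (i, j, k - 1)" if "P (i, j, k)" for i j k
    using assms(2)[OF that, of "(1, 0, 0)"] assms(2)[OF that, of "(-1, 0, 0)"]
      assms(2)[OF that, of "(0, 1, 0)"] assms(2)[OF that, of "(0, -1, 0)"]
      assms(2)[OF that, of "(0, 0, 1)"] assms(2)[OF that, of "(0, 0, -1)"]
    by (simp_all add: nbrs_def)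
  have "P (i, b, c)" for i
    by (rule line[where Q = "\<lambda>i. P (i, b, c)" and x = a, OF _ step(1)]) (use assms(1) q0 in simp)
  then have "P (i, j, c)" for i j
    by (rule line[where Q = "\<lambda>j. P (i, j, c)" and x = b, OF _ step(2)])
  then have "P (i, j, k)" for i j k
    by (rule line[where Q = "\<lambda>k. P (i, j, k)" and x = c, OF _ step(3)])
  then show ?thesis by (cases q) simp
qed

lemma dirichlet_sum_eq_0_imp_const:
  assumes "periodic_grid N z" "N \<ge> 1" "dirichlet_sum N z = 0"
  shows "z p = z q"
proof -
  have cell_zero: "\<forall>d\<in>nbrs. (z (p + d) - z p)\<^sup>2 = 0" if "p \<in> cell N" for p
    using assms(3) that unfolding dirichlet_sum_def
    by (simp add: sum_nonneg_eq_0_iff sum_nonneg)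
  have "z (p + d) = z p" if "d \<in> nbrs" for p d
  proof -
    have "periodic_grid N (\<lambda>p. (z (p + d) - z p)\<^sup>2)"
      by (rule periodic_grid_comp2[OF periodic_grid_translate[OF assms(1)] assms(1)])
    from periodic_grid_in_image_cell[OF this assms(2), of p] obtain q
      where "q \<in> cell N" "(z (p + d) - z p)\<^sup>2 = (z (q + d) - z q)\<^sup>2"
      by blast
    with cell_zero that show ?thesis by simp
  qed
  then show ?thesis
    using grid_nbrs_induct[of "\<lambda>q. z q = z p" p q] by auto
qed

lemma int_steps_bound:
  fixes f :: "int \<Rightarrow> real"
  assumes "\<And>x. 0 \<le> x \<Longrightarrow> x < m \<Longrightarrow> \<bar>f (x + 1) - f x\<bar> \<le> e" "0 \<le> m"
  shows "\<bar>f m - f 0\<bar> \<le> m * e"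
  using assms(2,1)
proof (induction m rule: int_ge_induct)
  case (step x)
  then have "\<bar>f (x + 1) - f x\<bar> \<le> e" "\<bar>f x - f 0\<bar> \<le> x * e" by auto
  then show ?case by (simp add: algebra_simps)
qed simp

lemma periodic_grid_osc_le_dirichlet_sum:
  assumes "periodic_grid N w" "N \<ge> 1"
  shows "\<bar>w p - w (0, 0, 0)\<bar> \<le> 3 * real N * sqrt (dirichlet_sum N w)"
proof -
  let ?e = "sqrt (dirichlet_sum N w)"
  have step: "\<bar>w (q + d) - w q\<bar> \<le> ?e" if "q \<in> cell N" "d \<in> nbrs" for q d
    using real_sqrt_le_mono[OF nbr_diff_le_dirichlet_sum[OF that]] by simp
  obtain i j k where ijk: "cell_rep N p = (i, j, k)" by (cases "cell_rep N p")
  then have "(i, j, k) \<in> cell N" using cell_rep_in_cell[OF assms(2)] by metis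
  then have bounds: "0 \<le> i" "i < int N" "0 \<le> j" "j < int N" "0 \<le> k" "k < int N"
    by (auto simp: cell_def)
  have "\<bar>w (i, j, k) - w (0, j, k)\<bar> \<le> i * ?e"
  proof (rule int_steps_bound[where f = "\<lambda>x. w (x, j, k)"])
    fix x assume "0 \<le> x" "x < i"
    then show "\<bar>w (x + 1, j, k) - w (x, j, k)\<bar> \<le> ?e"
      using step[of "(x, j, k)" "(1, 0, 0)"] bounds by (simp add: cell_def nbrs_def)
  qed (use bounds in simp)
  moreover have "\<bar>w (0, j, k) - w (0, 0, k)\<bar> \<le> j * ?e"
  proof (rule int_steps_bound[where f = "\<lambda>x. w (0, x, k)"])
    fix x assume "0 \<le> x" "x < j"
    then show "\<bar>w (0, x + 1, k) - w (0, x, k)\<bar> \<le> ?e"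
      using step[of "(0, x, k)" "(0, 1, 0)"] bounds by (simp add: cell_def nbrs_def)
  qed (use bounds in simp)
  moreover have "\<bar>w (0, 0, k) - w (0, 0, 0)\<bar> \<le> k * ?e"
  proof (rule int_steps_bound[where f = "\<lambda>x. w (0, 0, x)"])
    fix x assume "0 \<le> x" "x < k"
    then show "\<bar>w (0, 0, x + 1) - w (0, 0, x)\<bar> \<le> ?e"
      using step[of "(0, 0, x)" "(0, 0, 1)"] bounds by (simp add: cell_def nbrs_def)
  qed (use bounds in simp)
  moreover have "real_of_int i * ?e \<le> N * ?e" "real_of_int j * ?e \<le> N * ?e"
    "real_of_int k * ?e \<le> N * ?e"
    using bounds by (auto intro!: mult_right_mono simp: dirichlet_sum_nonneg)
  ultimately have "\<bar>w (i, j, k) - w (0, 0, 0)\<bar> \<le> 3 * real N * ?e" by linarith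
  then show ?thesis using periodic_grid_cell_rep[OF assms(1), of p] ijk by simp
qed

lemma sum_nbrs_indicator_bounds:
  "0 \<le> (\<Sum>d\<in>nbrs. indicator S (q + d) :: real)" "(\<Sum>d\<in>nbrs. indicator S (q + d) :: real) \<le> 6"
  using sum_bounded_above[of nbrs "\<lambda>d. indicator S (q + d) :: real" 1]
  by (auto simp: sum_nonneg card_nbrs indicator_def)

lemma lap_h_indicator_mem:
  assumes "h \<noteq> 0" "q \<in> S"
  shows "- 6 / h\<^sup>2 \<le> lap_h h (indicator S) q \<and> lap_h h (indicator S) q \<le> 0"
proof -
  let ?s = "\<Sum>d\<in>nbrs. indicator S (q + d) :: real"
  have "- 6 / h\<^sup>2 \<le> (?s - 6) / h\<^sup>2"
    by (rule divide_right_mono) (use sum_nbrs_indicator_bounds[of S q] in auto)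
  moreover have "(?s - 6) / h\<^sup>2 \<le> 0"
    by (rule divide_nonpos_pos) (use sum_nbrs_indicator_bounds[of S q] assms(1) in auto)
  ultimately show ?thesis using assms(2) by (simp add: lap_h_nbrs)
qed

lemma lap_h_indicator_not_mem:
  assumes "h \<noteq> 0" "q \<notin> S"
  shows "0 \<le> lap_h h (indicator S) q \<and> lap_h h (indicator S) q \<le> 6 / h\<^sup>2"
  using sum_nbrs_indicator_bounds[of S q] assms
  by (auto simp: lap_h_nbrs divide_right_mono)

lemma lap_h_indicator_boundary:
  assumes "h \<noteq> 0" "q \<in> S" "d \<in> nbrs" "q + d \<notin> S"
  shows "lap_h h (indicator S) q \<le> - 1 / h\<^sup>2"
proof -
  have "(\<Sum>e\<in>nbrs - {d}. indicator S (q + e) :: real) \<le> card (nbrs - {d})"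
    using sum_bounded_above[of "nbrs - {d}" "\<lambda>e. indicator S (q + e) :: real" 1]
    by (simp add: indicator_def)
  then have "(\<Sum>e\<in>nbrs. indicator S (q + e) :: real) \<le> 5"
    using assms(3,4) by (simp add: sum.remove card_nbrs)
  then have "((\<Sum>e\<in>nbrs. indicator S (q + e)) - 6) / h\<^sup>2 \<le> - 1 / h\<^sup>2"
    by (intro divide_right_mono) auto
  with assms(2) show ?thesis
    by (simp add: lap_h_nbrs)
qed

lemma continuous_on_grid_eval [continuous_intros]: "continuous_on S (\<lambda>w::grid. w p)"
  by (rule continuous_on_subset[OF continuous_on_product_coordinates]) simp

lemma continuous_on_lap_h [continuous_intros]:
  "(\<And>q. continuous_on S (\<lambda>w. f w q)) \<Longrightarrow> continuous_on S (\<lambda>w. lap_h h (f w) p)"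
  by (cases p) (simp add: lap_h_def divide_inverse, intro continuous_intros, auto)

section \<open>The Flory--Huggins entropy\<close>

definition phi :: "real \<Rightarrow> real" where
  "phi x = (1 + x) * ln (1 + x) + (1 - x) * ln (1 - x)"

definition dphi :: "real \<Rightarrow> real" where
  "dphi x = ln (1 + x) - ln (1 - x)"

lemma phi_minus [simp]: "phi (- x) = phi x"
  by (simp add: phi_def)

lemma phi_has_real_derivative: "- 1 < x \<Longrightarrow> x < 1 \<Longrightarrow> (phi has_real_derivative dphi x) (at x)"
  unfolding phi_def dphi_def by (rule derivative_eq_intros refl | simp)+

lemma phi_line_has_real_derivative:
  assumes "- 1 < x" "x < 1"
  shows "((\<lambda>t. phi (x + t * k)) has_real_derivative dphi x * k) (at 0)"
proof -
  have "((\<lambda>t. x + t * k) has_real_derivative k) (at 0)"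
    by (rule derivative_eq_intros refl | simp)+
  from DERIV_chain2[OF _ this, of phi "dphi x"] phi_has_real_derivative[OF assms]
  show ?thesis by (simp add: mult.commute)
qed

lemma continuous_on_x_ln_x: "continuous_on {0..} (\<lambda>x::real. x * ln x)"
proof -
  have "continuous (at x within {0..}) (\<lambda>x::real. x * ln x)" if "x \<ge> 0" for x
  proof (cases "x = 0")
    case True
    have "((\<lambda>x::real. x * ln x) \<longlongrightarrow> 0) (at_right 0)"
      by real_asymp
    then have "((\<lambda>x::real. x * ln x) \<longlongrightarrow> 0 * ln 0) (at 0 within {0..})"
      by (simp add: at_within_Ici_at_right)
    then show ?thesis using True by (simp add: continuous_within)
  next
    case False
    with that have "isCont (\<lambda>x::real. x * ln x) x"
      by (intro continuous_intros) auto
    then show ?thesis by (rule continuous_at_imp_continuous_at_within)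
  qed
  then show ?thesis by (simp add: continuous_on_eq_continuous_within)
qed

lemma continuous_on_phi: "continuous_on {- 1..1} phi"
  unfolding phi_def
  by (intro continuous_on_add continuous_on_compose2[OF continuous_on_x_ln_x] continuous_intros) auto

lemma dphi_mono: "- 1 < x \<Longrightarrow> x \<le> y \<Longrightarrow> y < 1 \<Longrightarrow> dphi x \<le> dphi y"
  unfolding dphi_def by (smt (verit) ln_le_cancel_iff)

lemma x_ln_x_ge: "0 \<le> x \<Longrightarrow> x - 1 \<le> x * ln (x::real)"
proof (cases "x = 0")
  case False
  assume "0 \<le> x"
  with False have x: "x > 0" by simp
  have "- ln x \<le> 1 / x - 1"
    using ln_le_minus_one[of "1 / x"] x by (simp add: ln_div)
  then have "x * (- ln x) \<le> x * (1 / x - 1)"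
    using x by (intro mult_left_mono) auto
  moreover have "x * (1 / x - 1) = 1 - x"
    using x by (simp add: field_simps)
  ultimately show ?thesis by linarith
qed simp

lemma phi_nonneg: "- 1 \<le> x \<Longrightarrow> x \<le> 1 \<Longrightarrow> 0 \<le> phi x"
  using x_ln_x_ge[of "1 + x"] x_ln_x_ge[of "1 - x"] unfolding phi_def by linarith

lemma phi_MVT:
  assumes "- 1 \<le> a" "a < b" "b \<le> 1"
  obtains z where "a < z" "z < b" "phi b - phi a = (b - a) * dphi z"
proof -
  have "continuous_on {a..b} phi"
    using continuous_on_subset[OF continuous_on_phi] assms by auto
  moreover have "phi differentiable (at x)" if "a < x" "x < b" for x
    using phi_has_real_derivative[of x] that assms real_differentiable_def by fastforce
  ultimately obtain l z where z: "a < z" "z < b" "DERIV phi z :> l" "phi b - phi a = (b - a) * l"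
    using MVT[OF assms(2)] by blast
  moreover have "DERIV phi z :> dphi z"
    using phi_has_real_derivative[of z] z assms by simp
  ultimately show ?thesis using that DERIV_unique by blast
qed

lemma phi_one_minus_le:
  assumes "0 \<le> s" "s \<le> 1"
  shows "phi (1 - s) - phi 1 \<le> s * ln s"
proof -
  have "(2 - s) * ln (2 - s) \<le> 2 * ln 2"
    using assms by (intro mult_mono) auto
  then show ?thesis by (simp add: phi_def)
qed

lemma phi_one_minus_le_phi_one:
  assumes "0 \<le> s" "s \<le> 1"
  shows "phi (1 - s) \<le> phi 1"
proof -
  have "s * ln s \<le> 0"
  proof (cases "s = 0")
    case False
    with assms show ?thesis
      by (intro mult_nonneg_nonpos) (auto simp: ln_le_zero_iff)
  qed simp
  with phi_one_minus_le[OF assms] show ?thesis by simp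
qed

lemma phi_one_minus_le_ln:
  assumes "0 < a" "a \<le> s" "s \<le> c" "c \<le> 1"
  shows "phi (1 - s) - phi 1 \<le> a * ln c"
proof -
  have "phi (1 - s) - phi 1 \<le> s * ln s"
    using assms by (intro phi_one_minus_le) auto
  also have "\<dots> \<le> s * ln c"
    using assms by (intro mult_left_mono) auto
  also have "\<dots> \<le> a * ln c"
    using assms by (intro mult_right_mono_neg) auto
  finally show ?thesis .
qed

lemma phi_increment_le:
  assumes "- 1 \<le> x" "0 \<le> \<delta>" "x + \<delta> \<le> b" "b < 1"
  shows "phi (x + \<delta>) - phi x \<le> \<delta> * \<bar>dphi b\<bar>"
proof (cases "\<delta> = 0")
  case False
  with assms obtain z where z: "x < z" "z < x + \<delta>" "phi (x + \<delta>) - phi x = \<delta> * dphi z"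
    using phi_MVT[of x "x + \<delta>"] by auto
  have "dphi z \<le> \<bar>dphi b\<bar>"
    using dphi_mono[of z b] z assms by simp
  with z assms show ?thesis by (simp add: mult_left_mono)
qed simp

lemma eventually_ln_dominates_at_right_0:
  fixes C \<sigma> c :: real
  assumes "\<sigma> > 0" "c > 0"
  shows "\<forall>\<^sub>F t in at_right 0. C + \<sigma> * ln (c * t) < 0"
  using assms by real_asymp

section \<open>The reduced variational problem\<close>

locale ch_step =
  fixes N :: nat and h \<tau> \<epsilon> \<theta> :: real and un :: grid
  assumes N_ge_1: "N \<ge> 1" and h_pos: "h > 0" and tau_pos: "\<tau> > 0"
    and periodic_un: "periodic_grid N un" and un_bounds: "\<And>p. - 1 < un p \<and> un p < 1"
begin

definition phase :: "grid \<Rightarrow> grid" where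
  "phase w = (\<lambda>p. un p + \<tau> * lap_h h w p)"

text \<open>This is K without the factor \<open>h\<^sup>2\<close> of the inner product; the gradient terms appear in
  the summed-by-parts form \<open>- u \<Delta>\<^sub>h u\<close>.\<close>

definition energy :: "grid \<Rightarrow> real" where
  "energy w = (\<Sum>p\<in>cell N. phi (phase w p) - \<theta> * un p * phase w p
     - \<epsilon>\<^sup>2 / 2 * phase w p * lap_h h (phase w) p - \<tau> / 2 * w p * lap_h h w p)"

definition admissible :: "grid set" where
  "admissible = {w. periodic_grid N w \<and> (\<forall>p. - 1 \<le> phase w p \<and> phase w p \<le> 1)}"

definition energy_slope :: "grid \<Rightarrow> grid \<Rightarrow> real" where
  "energy_slope w v = (\<Sum>p\<in>cell N. - \<theta> * un p * (\<tau> * lap_h h v p)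
     - \<epsilon>\<^sup>2 / 2 * (\<tau> * lap_h h v p * lap_h h (phase w) p + phase w p * (\<tau> * lap_h h (lap_h h v) p))
     - \<tau> / 2 * (v p * lap_h h w p + w p * lap_h h v p))"

definition energy_curv :: "grid \<Rightarrow> real" where
  "energy_curv v = (\<Sum>p\<in>cell N. - \<epsilon>\<^sup>2 / 2 * (\<tau> * lap_h h v p) * (\<tau> * lap_h h (lap_h h v) p)
     - \<tau> / 2 * v p * lap_h h v p)"

lemma periodic_phase: "periodic_grid N w \<Longrightarrow> periodic_grid N (phase w)"
  unfolding phase_def by (rule periodic_grid_comp2[OF periodic_un periodic_grid_lap_h])

lemma phase_line: "phase (\<lambda>p. w p + t * v p) = (\<lambda>p. phase w p + t * (\<tau> * lap_h h v p))"
  by (simp add: phase_def lap_h_add lap_h_cmult algebra_simps)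

lemma phase_add_const: "phase (\<lambda>p. w p + c) = phase w"
  by (simp add: phase_def lap_h_add_const)

lemma sum_cell_phase: "periodic_grid N w \<Longrightarrow> (\<Sum>p\<in>cell N. phase w p) = (\<Sum>p\<in>cell N. un p)"
  unfolding phase_def using sum_cell_lap_h[of N w h] N_ge_1
  by (simp add: sum.distrib sum_distrib_left[symmetric])

lemma energy_line:
  "energy (\<lambda>p. w p + t * v p) = energy w + energy_slope w v * t + energy_curv v * t\<^sup>2
     + (\<Sum>p\<in>cell N. phi (phase w p + t * (\<tau> * lap_h h v p)) - phi (phase w p))"
proof -
  have "energy (\<lambda>p. w p + t * v p) = (\<Sum>p\<in>cell N.
      (phi (phase w p) - \<theta> * un p * phase w p - \<epsilon>\<^sup>2 / 2 * phase w p * lap_h h (phase w) p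
        - \<tau> / 2 * w p * lap_h h w p)
      + t * (- \<theta> * un p * (\<tau> * lap_h h v p)
         - \<epsilon>\<^sup>2 / 2 * (\<tau> * lap_h h v p * lap_h h (phase w) p + phase w p * (\<tau> * lap_h h (lap_h h v) p))
         - \<tau> / 2 * (v p * lap_h h w p + w p * lap_h h v p))
      + t\<^sup>2 * (- \<epsilon>\<^sup>2 / 2 * (\<tau> * lap_h h v p) * (\<tau> * lap_h h (lap_h h v) p) - \<tau> / 2 * v p * lap_h h v p)
      + (phi (phase w p + t * (\<tau> * lap_h h v p)) - phi (phase w p)))"
    unfolding energy_def phase_line lap_h_add lap_h_cmult
    by (rule sum.cong) (simp_all add: algebra_simps power2_eq_square)
  also have "\<dots> = energy w + energy_slope w v * t + energy_curv v * t\<^sup>2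
     + (\<Sum>p\<in>cell N. phi (phase w p + t * (\<tau> * lap_h h v p)) - phi (phase w p))"
    unfolding energy_def energy_slope_def energy_curv_def sum.distrib sum_distrib_left[symmetric]
    by (simp add: algebra_simps)
  finally show ?thesis .
qed

lemma energy_add_const:
  assumes "periodic_grid N w"
  shows "energy (\<lambda>p. w p + c) = energy w"
proof -
  have "energy_slope w (\<lambda>p. 1) = - \<tau> / 2 * (\<Sum>p\<in>cell N. lap_h h w p)"
    by (simp add: energy_slope_def lap_h_const sum_distrib_left)
  then have "energy_slope w (\<lambda>p. 1) = 0"
    using sum_cell_lap_h[OF assms N_ge_1] by simp
  moreover have "energy_curv (\<lambda>p. 1) = 0"
    by (simp add: energy_curv_def lap_h_const)
  ultimately show ?thesis
    using energy_line[of w c "\<lambda>p. 1"] by (simp add: lap_h_const)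
qed

lemma energy_lower_bound:
  assumes "w \<in> admissible"
  shows "- \<bar>\<theta>\<bar> * card (cell N) + \<tau> / (4 * h\<^sup>2) * dirichlet_sum N w \<le> energy w"
proof -
  have w: "periodic_grid N w" "\<And>p. - 1 \<le> phase w p \<and> phase w p \<le> 1"
    using assms by (auto simp: admissible_def)
  have entropy: "0 \<le> (\<Sum>p\<in>cell N. phi (phase w p))"
    using w(2) by (intro sum_nonneg phi_nonneg) auto
  have "\<theta> * un p * phase w p \<le> \<bar>\<theta>\<bar>" for p
  proof -
    have "\<bar>un p\<bar> * \<bar>phase w p\<bar> \<le> 1"
      using un_bounds[of p] w(2)[of p] by (intro mult_le_one) auto
    then have "\<bar>\<theta>\<bar> * (\<bar>un p\<bar> * \<bar>phase w p\<bar>) \<le> \<bar>\<theta>\<bar>"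
      by (simp add: mult_left_le)
    moreover have "\<theta> * un p * phase w p \<le> \<bar>\<theta>\<bar> * (\<bar>un p\<bar> * \<bar>phase w p\<bar>)"
      by (metis abs_ge_self abs_mult mult.assoc)
    ultimately show ?thesis by linarith
  qed
  then have coupling: "(\<Sum>p\<in>cell N. \<theta> * un p * phase w p) \<le> card (cell N) * \<bar>\<theta>\<bar>"
    using sum_bounded_above[of "cell N" "\<lambda>p. \<theta> * un p * phase w p" "\<bar>\<theta>\<bar>"] by simp
  have "(\<Sum>p\<in>cell N. phase w p * lap_h h (phase w) p) \<le> 0"
    using sum_cell_mult_lap_h_self[OF periodic_phase[OF w(1)] N_ge_1, of h]
      dirichlet_sum_nonneg[of N "phase w"] h_pos
    by (simp add: divide_nonpos_pos)
  then have interface: "0 \<le> - (\<epsilon>\<^sup>2 / 2 * (\<Sum>p\<in>cell N. phase w p * lap_h h (phase w) p))"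
    by (simp add: mult_nonneg_nonpos)
  have mobility: "- (\<tau> / 2 * (\<Sum>p\<in>cell N. w p * lap_h h w p)) = \<tau> / (4 * h\<^sup>2) * dirichlet_sum N w"
    using sum_cell_mult_lap_h_self[OF w(1) N_ge_1, of h] by simp
  have "energy w = (\<Sum>p\<in>cell N. phi (phase w p)) - (\<Sum>p\<in>cell N. \<theta> * un p * phase w p)
     - \<epsilon>\<^sup>2 / 2 * (\<Sum>p\<in>cell N. phase w p * lap_h h (phase w) p)
     - \<tau> / 2 * (\<Sum>p\<in>cell N. w p * lap_h h w p)"
    unfolding energy_def by (simp add: sum_subtractf sum_distrib_left mult.assoc)
  with entropy coupling interface mobility show ?thesis
    by (simp add: algebra_simps)
qed

lemma zero_admissible: "(\<lambda>p. 0) \<in> admissible"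
  using un_bounds by (auto simp: admissible_def phase_def lap_h_const periodic_grid_const less_imp_le)

lemma admissible_bounded:
  obtains M where "\<And>w p. w \<in> admissible \<Longrightarrow> w (0, 0, 0) = 0 \<Longrightarrow> energy w \<le> energy (\<lambda>p. 0)
    \<Longrightarrow> \<bar>w p\<bar> \<le> M"
proof
  fix w p
  assume w: "w \<in> admissible" "w (0, 0, 0) = 0" "energy w \<le> energy (\<lambda>p. 0)"
  let ?K = "energy (\<lambda>p. 0) + \<bar>\<theta>\<bar> * card (cell N)"
  have "\<tau> / (4 * h\<^sup>2) * dirichlet_sum N w \<le> ?K"
    using energy_lower_bound[OF w(1)] w(3) by simp
  then have "dirichlet_sum N w \<le> 4 * h\<^sup>2 / \<tau> * ?K"
    using tau_pos h_pos by (simp add: field_simps)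
  moreover have "\<bar>w p\<bar> \<le> 3 * real N * sqrt (dirichlet_sum N w)"
    using periodic_grid_osc_le_dirichlet_sum[of N w p] w(1,2) N_ge_1 by (simp add: admissible_def)
  ultimately show "\<bar>w p\<bar> \<le> 3 * real N * sqrt (4 * h\<^sup>2 / \<tau> * ?K)"
    by (smt (verit) mult_left_mono of_nat_0_le_iff real_sqrt_le_mono)
qed

lemma closed_admissible: "closed admissible"
proof -
  have "admissible = {w. periodic_grid N w} \<inter> {w. \<forall>p. - 1 \<le> phase w p \<and> phase w p \<le> 1}"
    by (auto simp: admissible_def)
  moreover have "closed {w::grid. periodic_grid N w}"
    unfolding periodic_grid_def
    by (intro closed_Collect_all closed_Collect_conj closed_Collect_eq continuous_on_grid_eval)
  moreover have "closed {w. \<forall>p. - 1 \<le> phase w p \<and> phase w p \<le> 1}"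
    unfolding phase_def
    by (intro closed_Collect_all closed_Collect_conj closed_Collect_le continuous_intros)
  ultimately show ?thesis by auto
qed

lemma continuous_on_energy: "continuous_on admissible energy"
proof -
  have entropy: "continuous_on admissible (\<lambda>w. phi (phase w p))" for p
  proof (rule continuous_on_compose2[OF continuous_on_phi])
    show "continuous_on admissible (\<lambda>w. phase w p)"
      unfolding phase_def by (intro continuous_intros)
    show "(\<lambda>w. phase w p) ` admissible \<subseteq> {- 1..1}"
      by (auto simp: admissible_def simp del: split_paired_All)
  qed
  then show ?thesis
    unfolding energy_def phase_def
    by (intro continuous_on_sum continuous_intros entropy[unfolded phase_def])
qed

lemma compact_admissible_normalized:
  "compact {w \<in> admissible. w (0, 0, 0) = 0 \<and> (\<forall>p. \<bar>w p\<bar> \<le> M)}"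
proof -
  have "\<bar>x\<bar> \<le> M \<longleftrightarrow> x \<in> {- M..M}" for x :: real
    by auto
  then have "{w \<in> admissible. w (0, 0, 0) = 0 \<and> (\<forall>p. \<bar>w p\<bar> \<le> M)}
      = PiE UNIV (\<lambda>_. {- M..M}) \<inter> (admissible \<inter> {w. w (0, 0, 0) = 0})"
    by (auto simp: PiE_iff simp del: split_paired_All)
  moreover have "compact (PiE UNIV (\<lambda>_::int \<times> int \<times> int. {- M..M}))"
    using compactin_PiE[of "\<lambda>_. euclidean" UNIV "\<lambda>_::int \<times> int \<times> int. {- M..M}"]
    by (simp add: euclidean_product_topology)
  moreover have "closed (admissible \<inter> {w. w (0, 0, 0) = 0})"
    by (intro closed_Int closed_admissible closed_Collect_eq continuous_on_grid_eval continuous_on_const)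
  ultimately show ?thesis
    by (simp add: compact_Int_closed)
qed

lemma energy_has_min:
  obtains w where "w \<in> admissible" "\<And>w'. w' \<in> admissible \<Longrightarrow> energy w \<le> energy w'"
proof -
  obtain M where M: "\<And>w p. w \<in> admissible \<Longrightarrow> w (0, 0, 0) = 0 \<Longrightarrow> energy w \<le> energy (\<lambda>p. 0)
      \<Longrightarrow> \<bar>w p\<bar> \<le> M"
    using admissible_bounded by blast
  let ?D = "{w \<in> admissible. w (0, 0, 0) = 0 \<and> (\<forall>p. \<bar>w p\<bar> \<le> M)}"
  have zero: "(\<lambda>p. 0) \<in> ?D"
    using zero_admissible M[OF zero_admissible] by simp
  moreover have "?D \<subseteq> admissible"
    by blast
  ultimately obtain w0 where w0: "w0 \<in> ?D" "\<And>w. w \<in> ?D \<Longrightarrow> energy w0 \<le> energy w"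
    using continuous_attains_inf[OF compact_admissible_normalized[of M] _
        continuous_on_subset[OF continuous_on_energy]] by blast
  show ?thesis
  proof (rule that)
    show "w0 \<in> admissible"
      using w0(1) by blast
    fix w assume w: "w \<in> admissible"
    define w' where "w' = (\<lambda>p. w p + - w (0, 0, 0))"
    have per: "periodic_grid N w"
      using w by (simp add: admissible_def)
    then have "energy w' = energy w"
      unfolding w'_def by (rule energy_add_const)
    have w': "w' \<in> admissible" "w' (0, 0, 0) = 0"
      using w periodic_grid_comp[OF per, of "\<lambda>x. x + - w (0, 0, 0)"]
      unfolding w'_def admissible_def mem_Collect_eq phase_add_const by simp_all
    show "energy w0 \<le> energy w"
    proof (cases "energy w' \<le> energy (\<lambda>p. 0)")
      case True
      with w' M[of w'] have "w' \<in> ?D"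
        by blast
      with w0(2)[of w'] \<open>energy w' = energy w\<close> show ?thesis by simp
    next
      case False
      with w0(2)[OF zero] \<open>energy w' = energy w\<close> show ?thesis by simp
    qed
  qed
qed

definition chem_pot :: "grid \<Rightarrow> grid" where
  "chem_pot w = (\<lambda>p. dphi (phase w p) - \<theta> * un p - \<epsilon>\<^sup>2 * lap_h h (phase w) p - w p)"

lemma periodic_chem_pot: "periodic_grid N w \<Longrightarrow> periodic_grid N (chem_pot w)"
  using periodic_phase[of w] periodic_grid_lap_h[OF periodic_phase[of w]] periodic_un
  unfolding chem_pot_def periodic_grid_def by simp

lemma energy_slope_eq:
  assumes w: "periodic_grid N w" and v: "periodic_grid N v"
  shows "energy_slope w v + (\<Sum>p\<in>cell N. dphi (phase w p) * (\<tau> * lap_h h v p))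
    = \<tau> * (\<Sum>p\<in>cell N. v p * lap_h h (chem_pot w) p)"
proof -
  note sym = sum_cell_lap_h_symmetric[OF _ _ N_ge_1, of _ _ h]
  have U: "periodic_grid N (phase w)"
    by (rule periodic_phase[OF w])
  have e1: "(\<Sum>p\<in>cell N. phase w p * lap_h h (lap_h h v) p)
      = (\<Sum>p\<in>cell N. v p * lap_h h (lap_h h (phase w)) p)"
   and e2: "(\<Sum>p\<in>cell N. lap_h h v p * lap_h h (phase w) p)
      = (\<Sum>p\<in>cell N. v p * lap_h h (lap_h h (phase w)) p)"
    using sym[OF U periodic_grid_lap_h[OF v]] sym[OF v periodic_grid_lap_h[OF U]]
    by (simp_all add: mult.commute)
  have e3: "(\<Sum>p\<in>cell N. w p * lap_h h v p) = (\<Sum>p\<in>cell N. v p * lap_h h w p)"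
   and e4: "(\<Sum>p\<in>cell N. un p * lap_h h v p) = (\<Sum>p\<in>cell N. v p * lap_h h un p)"
   and e5: "(\<Sum>p\<in>cell N. dphi (phase w p) * lap_h h v p)
      = (\<Sum>p\<in>cell N. v p * lap_h h (\<lambda>q. dphi (phase w q)) p)"
    using sym[OF w v] sym[OF periodic_un v] sym[OF periodic_grid_comp[OF U] v]
    by (simp_all add: mult.commute)
  have slope: "energy_slope w v = - \<theta> * \<tau> * (\<Sum>p\<in>cell N. un p * lap_h h v p)
     - \<epsilon>\<^sup>2 / 2 * \<tau> * (\<Sum>p\<in>cell N. lap_h h v p * lap_h h (phase w) p)
     - \<epsilon>\<^sup>2 / 2 * \<tau> * (\<Sum>p\<in>cell N. phase w p * lap_h h (lap_h h v) p)
     - \<tau> / 2 * (\<Sum>p\<in>cell N. v p * lap_h h w p) - \<tau> / 2 * (\<Sum>p\<in>cell N. w p * lap_h h v p)"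
    unfolding energy_slope_def by (simp add: sum_subtractf sum.distrib sum_distrib_left algebra_simps)
  have entropy: "(\<Sum>p\<in>cell N. dphi (phase w p) * (\<tau> * lap_h h v p))
      = \<tau> * (\<Sum>p\<in>cell N. dphi (phase w p) * lap_h h v p)"
    by (simp add: sum_distrib_left algebra_simps)
  have potential: "(\<Sum>p\<in>cell N. v p * lap_h h (chem_pot w) p)
      = (\<Sum>p\<in>cell N. v p * lap_h h (\<lambda>q. dphi (phase w q)) p) - \<theta> * (\<Sum>p\<in>cell N. v p * lap_h h un p)
        - \<epsilon>\<^sup>2 * (\<Sum>p\<in>cell N. v p * lap_h h (lap_h h (phase w)) p) - (\<Sum>p\<in>cell N. v p * lap_h h w p)"
    unfolding chem_pot_def lap_h_diff lap_h_cmult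
    by (simp add: sum_subtractf sum.distrib sum_distrib_left algebra_simps)
  show ?thesis
    unfolding slope entropy potential e1 e2 e3 e4 e5 by (simp add: algebra_simps)
qed

lemma first_variation_zero:
  assumes w: "w \<in> admissible" and min: "\<And>w'. w' \<in> admissible \<Longrightarrow> energy w \<le> energy w'"
    and interior: "\<And>p. - 1 < phase w p \<and> phase w p < 1" and v: "periodic_grid N v"
  shows "energy_slope w v + (\<Sum>p\<in>cell N. dphi (phase w p) * (\<tau> * lap_h h v p)) = 0"
proof -
  have wper: "periodic_grid N w"
    using w by (simp add: admissible_def)
  have "\<And>p. 1 - \<bar>phase w p\<bar> > 0"
    using interior by (simp add: abs_less_iff)
  then obtain \<eta> where \<eta>: "\<eta> > 0" "\<And>p. \<eta> \<le> 1 - \<bar>phase w p\<bar>"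
    using periodic_grid_pos_bounded_below[OF periodic_grid_comp[OF periodic_phase[OF wper],
        of "\<lambda>x. 1 - \<bar>x\<bar>"] N_ge_1] by blast
  obtain M where M: "M > 0" "\<And>p. \<bar>\<tau> * lap_h h v p\<bar> \<le> M"
    using periodic_grid_bounded[OF periodic_grid_comp[OF periodic_grid_lap_h[OF v], of "\<lambda>x. \<tau> * x"]
        N_ge_1] by blast
  define g where "g = (\<lambda>t. energy (\<lambda>p. w p + t * v p))"
  have "g 0 \<le> g t" if t: "\<bar>0 - t\<bar> < \<eta> / M" for t
  proof -
    have "- 1 \<le> phase w p + t * (\<tau> * lap_h h v p) \<and> phase w p + t * (\<tau> * lap_h h v p) \<le> 1" for p
    proof -
      have "\<bar>t\<bar> * \<bar>\<tau> * lap_h h v p\<bar> \<le> \<eta> / M * M"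
        using t M by (intro mult_mono) auto
      with M(1) have "\<bar>t * (\<tau> * lap_h h v p)\<bar> \<le> \<eta>"
        by (simp add: abs_mult)
      with \<eta>(2)[of p] abs_ge_self[of "phase w p"] abs_ge_minus_self[of "phase w p"]
      show ?thesis by (simp add: abs_le_iff)
    qed
    moreover have "periodic_grid N (\<lambda>p. w p + t * v p)"
      using periodic_grid_comp2[OF wper v, of "\<lambda>x y. x + t * y"] by simp
    ultimately have "(\<lambda>p. w p + t * v p) \<in> admissible"
      by (simp add: admissible_def phase_line)
    with min show ?thesis
      by (simp add: g_def)
  qed
  moreover have "(g has_real_derivative
      energy_slope w v + (\<Sum>p\<in>cell N. dphi (phase w p) * (\<tau> * lap_h h v p))) (at 0)"
    unfolding g_def energy_line
    by (rule derivative_eq_intros refl phi_line_has_real_derivative | use interior in simp)+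
  ultimately show ?thesis
    using DERIV_local_min \<eta>(1) M(1) by (metis divide_pos_pos)
qed

lemma minimizer_chem_pot_const:
  assumes w: "w \<in> admissible" and min: "\<And>w'. w' \<in> admissible \<Longrightarrow> energy w \<le> energy w'"
    and interior: "\<And>p. - 1 < phase w p \<and> phase w p < 1"
  shows "chem_pot w p = chem_pot w q"
proof -
  have wper: "periodic_grid N w"
    using w by (simp add: admissible_def)
  note \<mu> = periodic_chem_pot[OF wper]
  have "\<tau> * (\<Sum>p\<in>cell N. chem_pot w p * lap_h h (chem_pot w) p) = 0"
    using first_variation_zero[OF w min interior \<mu>] energy_slope_eq[OF wper \<mu>] by simp
  then have "dirichlet_sum N (chem_pot w) = 0"
    using sum_cell_mult_lap_h_self[OF \<mu> N_ge_1, of h] tau_pos h_pos by simp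
  then show ?thesis
    by (rule dirichlet_sum_eq_0_imp_const[OF \<mu> N_ge_1])
qed

definition contact :: "grid \<Rightarrow> (int \<times> int \<times> int) set" where
  "contact w = {q. phase w q = 1}"

lemma contact_boundary_point:
  assumes "w \<in> admissible" "p \<in> contact w"
  obtains q d where "q \<in> cell N" "q \<in> contact w" "d \<in> nbrs" "q + d \<notin> contact w"
proof -
  have wper: "periodic_grid N w"
    using assms(1) by (simp add: admissible_def)
  have "\<exists>q d. q \<in> contact w \<and> d \<in> nbrs \<and> q + d \<notin> contact w"
  proof (rule ccontr)
    assume "\<not> ?thesis"
    then have "q \<in> contact w" for q
      using grid_nbrs_induct[of "\<lambda>q. q \<in> contact w" p q] assms(2) by blast
    then have "(\<Sum>q\<in>cell N. un q) = (\<Sum>q\<in>cell N. 1)"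
      using sum_cell_phase[OF wper] by (simp add: contact_def)
    moreover have "(\<Sum>q\<in>cell N. un q) < (\<Sum>q\<in>cell N. 1)"
      using un_bounds cell_nonempty[OF N_ge_1] by (intro sum_strict_mono) auto
    ultimately show False by simp
  qed
  then obtain q d where q: "q \<in> contact w" "d \<in> nbrs" "q + d \<notin> contact w"
    by blast
  have U: "phase w (cell_rep N p) = phase w p" for p
    by (rule periodic_grid_cell_rep[OF periodic_phase[OF wper]])
  show ?thesis
  proof (rule that[of "cell_rep N q" d])
    show "cell_rep N q \<in> cell N"
      by (rule cell_rep_in_cell[OF N_ge_1])
    have "phase w (cell_rep N q + d) = phase w (q + d)"
      using U[of "cell_rep N q + d"] U[of "q + d"] by (simp add: cell_rep_add_cell_rep)
    with q U show "cell_rep N q \<in> contact w" "d \<in> nbrs" "cell_rep N q + d \<notin> contact w"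
      by (simp_all add: contact_def)
  qed
qed

lemma contact_increment_bounds:
  fixes t :: real and w :: grid
  assumes "0 \<le> t"
  defines "\<delta> \<equiv> \<lambda>q. t * (\<tau> * lap_h h (indicator (contact w)) q)"
  shows "q \<in> contact w \<Longrightarrow> - (6 * \<tau> / h\<^sup>2 * t) \<le> \<delta> q \<and> \<delta> q \<le> 0"
    and "q \<notin> contact w \<Longrightarrow> 0 \<le> \<delta> q \<and> \<delta> q \<le> 6 * \<tau> / h\<^sup>2 * t"
    and "q \<in> contact w \<Longrightarrow> d \<in> nbrs \<Longrightarrow> q + d \<notin> contact w \<Longrightarrow> \<delta> q \<le> - (\<tau> / h\<^sup>2 * t)"
proof -
  have h: "h \<noteq> 0"
    using h_pos by simp
  have scale: "t * (\<tau> * a) \<le> t * (\<tau> * b)" if "a \<le> b" for a b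
    using mult_left_mono[OF that, of "t * \<tau>"] assms(1) tau_pos by (simp add: mult.assoc)
  show "q \<in> contact w \<Longrightarrow> - (6 * \<tau> / h\<^sup>2 * t) \<le> \<delta> q \<and> \<delta> q \<le> 0"
    using scale[of "- 6 / h\<^sup>2" "lap_h h (indicator (contact w)) q"]
      scale[of "lap_h h (indicator (contact w)) q" 0] lap_h_indicator_mem[OF h, of q "contact w"]
    unfolding \<delta>_def by (simp add: algebra_simps)
  show "q \<notin> contact w \<Longrightarrow> 0 \<le> \<delta> q \<and> \<delta> q \<le> 6 * \<tau> / h\<^sup>2 * t"
    using scale[of 0 "lap_h h (indicator (contact w)) q"]
      scale[of "lap_h h (indicator (contact w)) q" "6 / h\<^sup>2"]
      lap_h_indicator_not_mem[OF h, of q "contact w"]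
    unfolding \<delta>_def by (simp add: algebra_simps)
  show "q \<in> contact w \<Longrightarrow> d \<in> nbrs \<Longrightarrow> q + d \<notin> contact w \<Longrightarrow> \<delta> q \<le> - (\<tau> / h\<^sup>2 * t)"
    using scale[of "lap_h h (indicator (contact w)) q" "- 1 / h\<^sup>2"]
      lap_h_indicator_boundary[OF h, of q "contact w" d]
    unfolding \<delta>_def by (simp add: algebra_simps)
qed

lemma contact_perturbation_admissible:
  assumes w: "w \<in> admissible" and \<eta>: "\<eta> \<le> 1" "\<And>q. q \<notin> contact w \<Longrightarrow> phase w q \<le> 1 - \<eta>"
    and t: "0 \<le> t" "6 * \<tau> / h\<^sup>2 * t \<le> \<eta> / 2"
  shows "(\<lambda>q. w q + t * indicator (contact w) q) \<in> admissible"
proof -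
  have wper: "periodic_grid N w" and U: "\<And>q. - 1 \<le> phase w q \<and> phase w q \<le> 1"
    using w by (auto simp: admissible_def simp del: split_paired_All)
  have "indicator (contact w) = (\<lambda>q. if phase w q = 1 then 1 else (0::real))"
    by (auto simp: contact_def indicator_def)
  then have "periodic_grid N (indicator (contact w) :: grid)"
    using periodic_grid_comp[OF periodic_phase[OF wper], of "\<lambda>x. if x = 1 then 1 else 0"] by simp
  then have "periodic_grid N (\<lambda>q. w q + t * indicator (contact w) q)"
    using periodic_grid_comp2[OF wper, of _ "\<lambda>x y. x + t * y"] by simp
  moreover have "- 1 \<le> phase w q + t * (\<tau> * lap_h h (indicator (contact w)) q)
      \<and> phase w q + t * (\<tau> * lap_h h (indicator (contact w)) q) \<le> 1" for q
  proof (cases "q \<in> contact w")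
    case True
    then have "phase w q = 1"
      by (simp add: contact_def)
    with contact_increment_bounds(1)[OF t(1) True] \<eta>(1) t(2) show ?thesis
      by linarith
  next
    case False
    with contact_increment_bounds(2)[OF t(1) False] U[of q] \<eta>(2)[OF False] t(2) show ?thesis
      by linarith
  qed
  ultimately show ?thesis
    by (simp add: admissible_def phase_line)
qed

lemma contact_entropy_increment_le:
  assumes w: "w \<in> admissible"
    and \<eta>: "0 < \<eta>" "\<eta> \<le> 1" "\<And>q. q \<notin> contact w \<Longrightarrow> phase w q \<le> 1 - \<eta>"
    and t: "0 \<le> t" "6 * \<tau> / h\<^sup>2 * t \<le> \<eta> / 2"
  shows "phi (phase w q + t * (\<tau> * lap_h h (indicator (contact w)) q)) - phi (phase w q)
    \<le> 6 * \<tau> / h\<^sup>2 * t * \<bar>dphi (1 - \<eta> / 2)\<bar>"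
proof (cases "q \<in> contact w")
  case True
  then have "phi (phase w q + t * (\<tau> * lap_h h (indicator (contact w)) q)) \<le> phi (phase w q)"
    using phi_one_minus_le_phi_one[of "- (t * (\<tau> * lap_h h (indicator (contact w)) q))"]
      contact_increment_bounds(1)[OF t(1) True] \<eta>(2) t(2)
    by (simp add: contact_def)
  moreover have "0 \<le> 6 * \<tau> / h\<^sup>2 * t * \<bar>dphi (1 - \<eta> / 2)\<bar>"
    using t(1) tau_pos by simp
  ultimately show ?thesis by linarith
next
  case False
  note \<delta> = contact_increment_bounds(2)[OF t(1) False]
  have "- 1 \<le> phase w q"
    using w by (simp add: admissible_def del: split_paired_All)
  then have "phi (phase w q + t * (\<tau> * lap_h h (indicator (contact w)) q)) - phi (phase w q)
      \<le> t * (\<tau> * lap_h h (indicator (contact w)) q) * \<bar>dphi (1 - \<eta> / 2)\<bar>"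
    using \<delta> \<eta>(1) \<eta>(3)[OF False] t(2) by (intro phi_increment_le) auto
  also have "\<dots> \<le> 6 * \<tau> / h\<^sup>2 * t * \<bar>dphi (1 - \<eta> / 2)\<bar>"
    using \<delta> by (intro mult_right_mono) auto
  finally show ?thesis .
qed

lemma contact_entropy_change_le:
  assumes w: "w \<in> admissible"
    and q0: "q0 \<in> cell N" "q0 \<in> contact w" "d0 \<in> nbrs" "q0 + d0 \<notin> contact w"
    and \<eta>: "0 < \<eta>" "\<eta> \<le> 1" "\<And>q. q \<notin> contact w \<Longrightarrow> phase w q \<le> 1 - \<eta>"
    and t: "0 < t" "6 * \<tau> / h\<^sup>2 * t \<le> \<eta> / 2"
  shows "(\<Sum>q\<in>cell N. phi (phase w q + t * (\<tau> * lap_h h (indicator (contact w)) q)) - phi (phase w q))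
    \<le> card (cell N) * (6 * \<tau> / h\<^sup>2 * t * \<bar>dphi (1 - \<eta> / 2)\<bar>) + \<tau> / h\<^sup>2 * t * ln (6 * \<tau> / h\<^sup>2 * t)"
proof -
  define T where "T q = phi (phase w q + t * (\<tau> * lap_h h (indicator (contact w)) q)) - phi (phase w q)"
    for q
  define B where "B = 6 * \<tau> / h\<^sup>2 * t * \<bar>dphi (1 - \<eta> / 2)\<bar>"
  have "T q0 \<le> \<tau> / h\<^sup>2 * t * ln (6 * \<tau> / h\<^sup>2 * t)"
  proof -
    let ?s = "- (t * (\<tau> * lap_h h (indicator (contact w)) q0))"
    have "\<tau> / h\<^sup>2 * t \<le> ?s" "?s \<le> 6 * \<tau> / h\<^sup>2 * t"
      using contact_increment_bounds(1)[OF less_imp_le[OF t(1)] q0(2)]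
        contact_increment_bounds(3)[OF less_imp_le[OF t(1)] q0(2,3,4)] by auto
    moreover have "0 < \<tau> / h\<^sup>2 * t"
      using t(1) tau_pos h_pos by simp
    moreover have "6 * \<tau> / h\<^sup>2 * t \<le> 1"
      using t(2) \<eta>(2) by linarith
    ultimately have "phi (1 - ?s) - phi 1 \<le> \<tau> / h\<^sup>2 * t * ln (6 * \<tau> / h\<^sup>2 * t)"
      by (intro phi_one_minus_le_ln)
    with q0(2) show ?thesis
      by (simp add: T_def contact_def)
  qed
  moreover have "(\<Sum>q\<in>cell N - {q0}. T q) \<le> card (cell N) * B"
  proof -
    have "(\<Sum>q\<in>cell N - {q0}. T q) \<le> card (cell N - {q0}) * B"
      using sum_bounded_above[of "cell N - {q0}" T B]
        contact_entropy_increment_le[OF w \<eta> less_imp_le[OF t(1)] t(2)]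
      by (simp add: T_def B_def)
    also have "\<dots> \<le> card (cell N) * B"
      using t(1) tau_pos by (intro mult_right_mono) (auto intro: card_mono simp: B_def)
    finally show ?thesis .
  qed
  moreover have "(\<Sum>q\<in>cell N. T q) = T q0 + (\<Sum>q\<in>cell N - {q0}. T q)"
    using q0(1) by (simp add: sum.remove)
  ultimately show ?thesis
    by (simp add: T_def B_def)
qed

lemma energy_line_le:
  assumes "0 \<le> t" "t \<le> 1"
  shows "energy (\<lambda>p. w p + t * v p) \<le> energy w + (\<bar>energy_slope w v\<bar> + \<bar>energy_curv v\<bar>) * t
    + (\<Sum>p\<in>cell N. phi (phase w p + t * (\<tau> * lap_h h v p)) - phi (phase w p))"
proof -
  have "energy_slope w v * t \<le> \<bar>energy_slope w v\<bar> * t"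
    using assms by (intro mult_right_mono) auto
  moreover have "energy_curv v * t\<^sup>2 \<le> \<bar>energy_curv v\<bar> * t"
  proof -
    have "t\<^sup>2 \<le> t"
      using assms by (simp add: power2_eq_square mult_left_le)
    have "energy_curv v * t\<^sup>2 \<le> \<bar>energy_curv v\<bar> * t\<^sup>2"
      by (intro mult_right_mono) auto
    also have "\<dots> \<le> \<bar>energy_curv v\<bar> * t"
      using \<open>t\<^sup>2 \<le> t\<close> by (intro mult_left_mono) auto
    finally show ?thesis .
  qed
  ultimately show ?thesis
    using energy_line[of w t v] by (simp add: distrib_right)
qed

lemma contact_perturbation_decreases_energy:
  assumes w: "w \<in> admissible"
    and q0: "q0 \<in> cell N" "q0 \<in> contact w" "d0 \<in> nbrs" "q0 + d0 \<notin> contact w"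
    and \<eta>: "0 < \<eta>" "\<eta> \<le> 1" "\<And>q. q \<notin> contact w \<Longrightarrow> phase w q \<le> 1 - \<eta>"
  obtains t where "(\<lambda>q. w q + t * indicator (contact w) q) \<in> admissible"
    "energy (\<lambda>q. w q + t * indicator (contact w) q) < energy w"
proof -
  define v :: grid where "v = indicator (contact w)"
  define c where "c = 6 * \<tau> / h\<^sup>2"
  define C where "C = \<bar>energy_slope w v\<bar> + \<bar>energy_curv v\<bar> + card (cell N) * (c * \<bar>dphi (1 - \<eta> / 2)\<bar>)"
  have c: "c > 0"
    using tau_pos h_pos by (simp add: c_def)
  have "\<forall>\<^sub>F t in at_right 0. C + \<tau> / h\<^sup>2 * ln (c * t) < 0"
    using tau_pos h_pos c by (intro eventually_ln_dominates_at_right_0) auto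
  moreover have "\<forall>\<^sub>F t in at_right 0. 0 < t \<and> t < min 1 (\<eta> / (2 * c))"
    by (rule eventually_mono[OF eventually_at_right_real[of 0 "min 1 (\<eta> / (2 * c))"]])
      (use \<eta> c in auto)
  ultimately obtain t where t: "0 < t" "t < min 1 (\<eta> / (2 * c))" "C + \<tau> / h\<^sup>2 * ln (c * t) < 0"
    using eventually_happens'[OF trivial_limit_at_right_real] eventually_conj by blast
  have "t * (2 * c) < \<eta>"
    using t(2) c by (simp add: pos_less_divide_eq)
  then have ct: "6 * \<tau> / h\<^sup>2 * t \<le> \<eta> / 2"
    by (simp add: c_def algebra_simps)
  have "energy (\<lambda>p. w p + t * v p) \<le> energy w + (\<bar>energy_slope w v\<bar> + \<bar>energy_curv v\<bar>) * t
      + (card (cell N) * (c * t * \<bar>dphi (1 - \<eta> / 2)\<bar>) + \<tau> / h\<^sup>2 * t * ln (c * t))"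
    using energy_line_le[of t w v] contact_entropy_change_le[OF w q0 \<eta> t(1) ct] t(1,2)
    unfolding v_def c_def by simp
  also have "\<dots> = energy w + t * (C + \<tau> / h\<^sup>2 * ln (c * t))"
    by (simp add: C_def algebra_simps)
  also have "\<dots> < energy w"
    using t(1,3) by (simp add: mult_pos_neg)
  finally show ?thesis
    using that contact_perturbation_admissible[OF w \<eta>(2,3) less_imp_le[OF t(1)] ct]
    unfolding v_def by blast
qed

lemma contact_gap:
  assumes "w \<in> admissible"
  obtains \<eta> where "0 < \<eta>" "\<eta> \<le> 1" "\<And>q. q \<notin> contact w \<Longrightarrow> phase w q \<le> 1 - \<eta>"
proof -
  have "periodic_grid N w" and U: "\<And>q. phase w q \<le> 1"
    using assms by (auto simp: admissible_def simp del: split_paired_All)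
  moreover have "(if phase w q = 1 then 1 else 1 - phase w q) > 0" for q
    using U[of q] by auto
  ultimately obtain \<eta> where \<eta>: "\<eta> > 0" "\<And>q. \<eta> \<le> (if phase w q = 1 then 1 else 1 - phase w q)"
    using periodic_grid_pos_bounded_below[OF periodic_grid_comp[OF periodic_phase,
        of w "\<lambda>x. if x = 1 then 1 else 1 - x"] N_ge_1] by blast
  show ?thesis
  proof (rule that[of "min 1 \<eta>"])
    show "0 < min 1 \<eta>" "min 1 \<eta> \<le> 1"
      using \<eta>(1) by auto
    show "phase w q \<le> 1 - min 1 \<eta>" if "q \<notin> contact w" for q
      using \<eta>(2)[of q] that by (auto simp: contact_def)
  qed
qed

lemma minimizer_phase_lt_one:
  assumes w: "w \<in> admissible" and min: "\<And>w'. w' \<in> admissible \<Longrightarrow> energy w \<le> energy w'"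
  shows "phase w p < 1"
proof (rule ccontr)
  assume "\<not> phase w p < 1"
  moreover have "phase w p \<le> 1"
    using w by (simp add: admissible_def del: split_paired_All)
  ultimately have "p \<in> contact w"
    by (simp add: contact_def)
  then obtain q0 d0 where q0: "q0 \<in> cell N" "q0 \<in> contact w" "d0 \<in> nbrs" "q0 + d0 \<notin> contact w"
    using contact_boundary_point[OF w] by blast
  obtain \<eta> where \<eta>: "0 < \<eta>" "\<eta> \<le> 1" "\<And>q. q \<notin> contact w \<Longrightarrow> phase w q \<le> 1 - \<eta>"
    using contact_gap[OF w] by blast
  obtain t where "(\<lambda>q. w q + t * indicator (contact w) q) \<in> admissible"
    "energy (\<lambda>q. w q + t * indicator (contact w) q) < energy w"
    using contact_perturbation_decreases_energy[OF w q0 \<eta>] by blast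
  with min show False
    by fastforce
qed

lemma minimizer_phase_gt_minus_one:
  assumes w: "w \<in> admissible" and min: "\<And>w'. w' \<in> admissible \<Longrightarrow> energy w \<le> energy w'"
  shows "- 1 < phase w p"
proof -
  interpret mirror: ch_step N h \<tau> \<epsilon> \<theta> "\<lambda>p. - un p"
    using N_ge_1 h_pos tau_pos periodic_grid_comp[OF periodic_un] un_bounds by unfold_locales auto
  have phase_minus: "mirror.phase (\<lambda>p. - x p) = (\<lambda>p. - phase x p)" for x
    by (simp add: mirror.phase_def phase_def lap_h_minus)
  have energy_minus: "mirror.energy (\<lambda>p. - x p) = energy x" for x
    by (simp add: mirror.energy_def energy_def phase_minus lap_h_minus)
  have admissible_minus: "(\<lambda>p. - x p) \<in> mirror.admissible \<longleftrightarrow> x \<in> admissible" for x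
    by (auto simp: mirror.admissible_def admissible_def phase_minus periodic_grid_def)
  have "mirror.phase (\<lambda>p. - w p) p < 1"
  proof (rule mirror.minimizer_phase_lt_one)
    show "(\<lambda>p. - w p) \<in> mirror.admissible"
      using w admissible_minus by simp
    fix w' assume "w' \<in> mirror.admissible"
    then have "(\<lambda>p. - w' p) \<in> admissible"
      using admissible_minus[of "\<lambda>p. - w' p"] by simp
    then show "mirror.energy (\<lambda>p. - w p) \<le> mirror.energy w'"
      using min energy_minus[of w] energy_minus[of "\<lambda>p. - w' p"] by simp
  qed
  then show ?thesis
    by (simp add: phase_minus)
qed

lemma reduced_system_solvable:
  obtains u w where "periodic_grid N u" "periodic_grid N w" "\<And>p. - 1 < u p \<and> u p < 1"
    "\<And>p. \<tau> * lap_h h w p = u p - un p"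
    "\<And>p. w p = dphi (u p) - \<theta> * un p - \<epsilon>\<^sup>2 * lap_h h u p"
proof -
  obtain w where w: "w \<in> admissible" and min: "\<And>w'. w' \<in> admissible \<Longrightarrow> energy w \<le> energy w'"
    using energy_has_min by blast
  have interior: "- 1 < phase w p \<and> phase w p < 1" for p
    using minimizer_phase_lt_one[OF w min] minimizer_phase_gt_minus_one[OF w min] by blast
  have wper: "periodic_grid N w"
    using w by (simp add: admissible_def)
  define c where "c = chem_pot w (0, 0, 0)"
  have "chem_pot w p = c" for p
    unfolding c_def by (rule minimizer_chem_pot_const[OF w min interior])
  then have potential: "w p + c = dphi (phase w p) - \<theta> * un p - \<epsilon>\<^sup>2 * lap_h h (phase w) p" for p
    by (simp add: chem_pot_def fun_eq_iff algebra_simps)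
  show ?thesis
  proof (rule that[of "phase w" "\<lambda>p. w p + c"])
    show "periodic_grid N (phase w)" "periodic_grid N (\<lambda>p. w p + c)"
      using periodic_phase[OF wper] periodic_grid_comp[OF wper] by auto
    fix p
    show "- 1 < phase w p \<and> phase w p < 1"
      by (rule interior)
    show "\<tau> * lap_h h (\<lambda>p. w p + c) p = phase w p - un p"
      by (simp add: lap_h_add_const phase_def)
    show "w p + c = dphi (phase w p) - \<theta> * un p - \<epsilon>\<^sup>2 * lap_h h (phase w) p"
      by (rule potential)
  qed
qed

end

theorem mainTheorem1:
  fixes L \<epsilon> \<theta>\<^sub>0 \<tau> \<alpha> h :: real and N :: nat and un :: grid
  assumes "L > 0" and "N \<ge> 1" and "h = L / real N"
    and "\<epsilon> > 0" and "\<theta>\<^sub>0 > 0" and "\<tau> > 0" and "0 < \<alpha>" and "\<alpha> < 1"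
    and "periodic_grid N un"
    and "\<forall>p. - 1 < un p \<and> un p < 1"
  shows "\<exists>u1 w1 u2 w2 u3 w3 :: grid.
     periodic_grid N u1 \<and> periodic_grid N w1 \<and> periodic_grid N u2 \<and>
     periodic_grid N w2 \<and> periodic_grid N u3 \<and> periodic_grid N w3 \<and>
     (\<forall>p. - 1 < u2 p \<and> u2 p < 1) \<and>
     (\<forall>p. - (\<epsilon>\<^sup>2 * lap_h h u1 p) - \<alpha> * w1 p + u3 p = 0) \<and>
     (\<forall>p. \<alpha> * (- u1 p + un p) + \<tau> * lap_h h w1 p - w3 p = 0) \<and>
     (\<forall>p. ln (1 + u2 p) - ln (1 - u2 p) - \<theta>\<^sub>0 * un p - (1 - \<alpha>) * w2 p - u3 p = 0) \<and>
     (\<forall>p. (1 - \<alpha>) * (- u2 p + un p) + w3 p = 0) \<and>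
     (\<forall>p. u1 p - u2 p = 0) \<and>
     (\<forall>p. w1 p - w2 p = 0)"
proof -
  have "h > 0"
    using assms(1-3) by simp
  interpret ch_step N h \<tau> \<epsilon> \<theta>\<^sub>0 un
    by unfold_locales (use assms(2,6,9,10) \<open>h > 0\<close> in auto)
  obtain u w where u: "periodic_grid N u" and w: "periodic_grid N w"
    and bounds: "\<And>p. - 1 < u p \<and> u p < 1"
    and mass: "\<And>p. \<tau> * lap_h h w p = u p - un p"
    and potential: "\<And>p. w p = dphi (u p) - \<theta>\<^sub>0 * un p - \<epsilon>\<^sup>2 * lap_h h u p"
    by (rule reduced_system_solvable) (rule that)
  let ?u3 = "\<lambda>p. \<epsilon>\<^sup>2 * lap_h h u p + \<alpha> * w p" and ?w3 = "\<lambda>p. (1 - \<alpha>) * (u p - un p)"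
  show ?thesis
  proof (rule exI[of _ u], rule exI[of _ w], rule exI[of _ u], rule exI[of _ w], rule exI[of _ ?u3],
      rule exI[of _ ?w3], intro conjI allI)
    show "periodic_grid N ?u3" "periodic_grid N ?w3"
      using periodic_grid_comp2[OF periodic_grid_lap_h[OF u] w, of "\<lambda>x y. \<epsilon>\<^sup>2 * x + \<alpha> * y"]
        periodic_grid_comp2[OF u assms(9), of "\<lambda>x y. (1 - \<alpha>) * (x - y)"] by simp_all
    fix p
    show "\<alpha> * (- u p + un p) + \<tau> * lap_h h w p - ?w3 p = 0"
      using mass[of p] by (simp add: algebra_simps)
    show "ln (1 + u p) - ln (1 - u p) - \<theta>\<^sub>0 * un p - (1 - \<alpha>) * w p - ?u3 p = 0"
      using potential[of p] by (simp add: dphi_def algebra_simps)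
  qed (simp_all add: u w bounds algebra_simps)
qed

end
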